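(* Let $\mathbb{N}$ be a strongly connected directed graph on vertices $\{1,\dots,m\}$, fix $q\in\{1,\dots,m\}$ and let $b_q$ be the $q$th unit vector of $\mathbb{R}^m$. Then there exists $G=[g_{ij}]\in\mathbb{R}^{m\times m}$ with all row sums equal to zero and with $g_{ij}=0$ whenever $j$ is not a neighbor of $i$ (i.e., whenever $j\neq i$ and there is no arc from $j$ to $i$ in $\mathbb{N}$), such that $(G,b_q)$ is a controllable pair.
   Context: In the neighbor graph, an arc from $j$ to $i$ means agent $j$ is a neighbor of agent $i$; every agent is considered a neighbor of itself. *)

theory Defs
  imports "HOL-Analysis.Analysis"
begin

text \<open>Vertices of the digraph are the elements of a finite type 'n (so m = CARD('n)).
  An arc relation E with E j i meaning: there is an arc from j to i (j is a neighbour of i).\<close>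

definition strongly_connected :: "('n \<Rightarrow> 'n \<Rightarrow> bool) \<Rightarrow> bool" where
  "strongly_connected E \<longleftrightarrow> (\<forall>u v. E\<^sup>*\<^sup>* u v)"

definition ctrb_columns :: "real^'n^'n \<Rightarrow> real^'n \<Rightarrow> (real^'n) set" where
  "ctrb_columns G b = {(((*v) G) ^^ k) b | k. k < CARD('n)}"

text \<open>(G,b) is controllable iff the controllability matrix has rank m,
  i.e. its column space has dimension m.\<close>
definition controllable_pair :: "real^'n^'n \<Rightarrow> real^'n \<Rightarrow> bool" where
  "controllable_pair G b \<longleftrightarrow> dim (span (ctrb_columns G b)) = CARD('n)"

definition unit_vec :: "'n::finite \<Rightarrow> real^'n" where
  "unit_vec q = (\<chi> i. if i = q then 1 else 0)"

end

theory Submission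
  imports Defs
begin

text \<open>Choose a shortest-path spanning tree of the digraph rooted at q, with parent map p, and
  pairwise distinct weights c with c q = 0. The matrix G whose row i is c i (e_(p i) - e_i) has zero
  row sums and is supported on the diagonal and the tree arcs. Its eigenvalues - c v are pairwise
  distinct, and for each v there is a left eigenvector supported on the tree path from v to q whose
  q-entry is nonzero. Pairing a linear relation among b_q, G b_q, ..., G^(m-1) b_q with these m left
  eigenvectors yields a polynomial of degree less than m with m distinct roots, so the relation is
  trivial and (G, b_q) is controllable.\<close>

lemma power_sum_coeffs_eq_zero:
  fixes a :: "nat \<Rightarrow> 'a::idom"
  assumes card: "n \<le> card S" and roots: "\<forall>x\<in>S. (\<Sum>k<n. a k * x ^ k) = 0" and "k < n"
  shows "a k = 0"
proof -
  define P where "P = (\<Sum>k<n. monom (a k) k)"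
  have coeff_P: "coeff P i = (if i < n then a i else 0)" for i
    unfolding P_def by (simp add: coeff_sum)
  have "P = 0"
  proof (rule ccontr)
    assume "P \<noteq> 0"
    have "degree P < n"
      using \<open>k < n\<close> by (intro degree_lessI) (auto simp: coeff_P \<open>P \<noteq> 0\<close>)
    have "S \<subseteq> {x. poly P x = 0}"
      using roots by (auto simp: P_def poly_sum poly_monom)
    then have "card S \<le> card {x. poly P x = 0}"
      by (intro card_mono poly_roots_finite \<open>P \<noteq> 0\<close>)
    also have "\<dots> \<le> degree P"
      by (rule card_poly_roots_bound[OF \<open>P \<noteq> 0\<close>])
    finally show False
      using card \<open>degree P < n\<close> by linarith
  qed
  then show ?thesis
    using coeff_P[of k] \<open>k < n\<close> by simp
qed

lemma dim_span_image_eq_card: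
  fixes f :: "'i \<Rightarrow> 'a::real_vector"
  assumes "finite I"
    and indep: "\<And>a. (\<Sum>i\<in>I. a i *\<^sub>R f i) = 0 \<Longrightarrow> \<forall>i\<in>I. a i = 0"
  shows "dim (span (f ` I)) = card I"
proof -
  have inj: "inj_on f I"
  proof (rule inj_onI, rule ccontr)
    fix i j assume "i \<in> I" "j \<in> I" "f i = f j" "i \<noteq> j"
    define a where "a k = (if k = i then 1 else if k = j then -1 else 0 :: real)" for k
    have "(\<Sum>k\<in>I. a k *\<^sub>R f k) = (\<Sum>k\<in>I. (if k = i then f i else 0) - (if k = j then f j else 0))"
      using \<open>i \<noteq> j\<close> by (intro sum.cong) (auto simp: a_def)
    also have "\<dots> = 0"
      using \<open>finite I\<close> \<open>i \<in> I\<close> \<open>j \<in> I\<close> \<open>f i = f j\<close> by (simp add: sum_subtractf)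
    finally have "a i = 0"
      using indep \<open>i \<in> I\<close> by blast
    then show False
      by (simp add: a_def)
  qed
  have "independent (f ` I)"
  proof (rule independent_if_scalars_zero)
    fix u x assume "(\<Sum>x\<in>f ` I. u x *\<^sub>R x) = 0" "x \<in> f ` I"
    then show "u x = 0"
      using indep[of "u \<circ> f"] by (auto simp: sum.reindex[OF inj])
  qed (use \<open>finite I\<close> in simp)
  then show ?thesis
    by (simp add: dim_eq_card_independent card_image[OF inj])
qed

lemma axis_vector_matrix_mult: "axis i 1 v* A = A $ i"
  for A :: "'a::semiring_1^'m^'n"
  by (simp add: vector_matrix_mult_def axis_def vec_eq_iff if_distrib[of "\<lambda>x. x * _"] cong: if_cong)

lemma sum_vector_matrix_mult: "(\<Sum>k\<in>K. x k) v* A = (\<Sum>k\<in>K. x k v* A)"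
  by (induction K rule: infinite_finite_induct) (simp_all add: vector_matrix_left_distrib)

lemma sum_axis: "(\<Sum>j\<in>UNIV. axis i x $ j) = x"
  for x :: "'a::comm_monoid_add"
  by (simp add: axis_def)

lemma inner_unit_vec: "y \<bullet> unit_vec q = y $ q"
  by (simp add: unit_vec_def inner_vec_def if_distrib[of "\<lambda>x. _ * x"] cong: if_cong)

lemma inner_iterate_left_eigenvector:
  fixes G :: "real^'n^'n" and y b :: "real^'n"
  assumes "y v* G = \<mu> *\<^sub>R y"
  shows "y \<bullet> (((*v) G) ^^ k) b = \<mu> ^ k * (y \<bullet> b)"
proof (induction k)
  case (Suc k)
  have "y \<bullet> (G *v (((*v) G) ^^ k) b) = (y v* G) \<bullet> (((*v) G) ^^ k) b"
    by (simp add: dot_lmul_matrix)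
  then show ?case
    using Suc assms by simp
qed simp

lemma controllable_pair_if_left_eigenvectors:
  fixes G :: "real^'n^'n" and b :: "real^'n" and \<mu> :: "'n \<Rightarrow> real"
  assumes "inj \<mu>" and eigen: "\<And>v. \<exists>y. y v* G = \<mu> v *\<^sub>R y \<and> y \<bullet> b \<noteq> 0"
  shows "controllable_pair G b"
proof -
  define f where "f k = (((*v) G) ^^ k) b" for k
  have "a k = 0" if rel: "(\<Sum>k<CARD('n). a k *\<^sub>R f k) = 0" and "k < CARD('n)" for a k
  proof (rule power_sum_coeffs_eq_zero)
    show "CARD('n) \<le> card (range \<mu>)"
      using \<open>inj \<mu>\<close> by (simp add: card_image)
    show "\<forall>x\<in>range \<mu>. (\<Sum>k<CARD('n). a k * x ^ k) = 0"
    proof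
      fix x assume "x \<in> range \<mu>"
      then obtain y where y: "y v* G = x *\<^sub>R y" "y \<bullet> b \<noteq> 0"
        using eigen by blast
      have "(\<Sum>k<CARD('n). a k * x ^ k) * (y \<bullet> b) = y \<bullet> (\<Sum>k<CARD('n). a k *\<^sub>R f k)"
        by (simp add: inner_sum_right f_def inner_iterate_left_eigenvector[OF y(1)]
            sum_distrib_right mult.assoc)
      then show "(\<Sum>k<CARD('n). a k * x ^ k) = 0"
        using rel y(2) by simp
    qed
  qed fact
  then have "dim (span (f ` {..<CARD('n)})) = CARD('n)"
    by (subst dim_span_image_eq_card) auto
  moreover have "ctrb_columns G b = f ` {..<CARD('n)}"
    unfolding ctrb_columns_def f_def by auto
  ultimately show ?thesis
    by (simp add: controllable_pair_def)
qed

definition spanning_arborescence :: "('n \<Rightarrow> 'n \<Rightarrow> bool) \<Rightarrow> 'n \<Rightarrow> ('n \<Rightarrow> 'n) \<Rightarrow> bool" where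
  "spanning_arborescence E r p \<longleftrightarrow> (\<forall>u. u \<noteq> r \<longrightarrow> E (p u) u) \<and> (\<forall>v. \<exists>k. (p ^^ k) v = r)"

lemma ex_spanning_arborescence:
  assumes reach: "\<And>u. E\<^sup>*\<^sup>* r u"
  shows "\<exists>p. spanning_arborescence E r p"
proof -
  define d where "d u = (LEAST n. (E ^^ n) r u)" for u
  have d_path: "(E ^^ d u) r u" for u
    unfolding d_def using reach[of u] by (rule LeastI_ex[OF rtranclp_imp_relpowp])
  have "\<exists>w. E w u \<and> d w < d u" if "u \<noteq> r" for u
  proof -
    obtain k where k: "d u = Suc k"
      using d_path[of u] \<open>u \<noteq> r\<close> by (cases "d u") auto
    then have "(E ^^ Suc k) r u"
      using d_path[of u] by simp
    then obtain w where "(E ^^ k) r w" "E w u"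
      by (rule relpowp_Suc_E)
    moreover have "d w \<le> k"
      unfolding d_def by (rule Least_le) fact
    ultimately show ?thesis
      using k by auto
  qed
  then have "\<forall>u. \<exists>w. u \<noteq> r \<longrightarrow> E w u \<and> d w < d u"
    by blast
  then obtain p where p: "\<forall>u. u \<noteq> r \<longrightarrow> E (p u) u \<and> d (p u) < d u"
    by (rule choice[THEN exE])
  have "\<exists>k. (p ^^ k) v = r" for v
  proof (induction v rule: measure_induct_rule[of d])
    case (less v)
    show ?case
    proof (cases "v = r")
      case False
      then obtain k where "(p ^^ k) (p v) = r"
        using less.IH p by blast
      then have "(p ^^ Suc k) v = r"
        by (simp only: funpow_Suc_right comp_apply)
      then show ?thesis ..
    qed (auto intro: exI[of _ 0])
  qed
  then show ?thesis
    using p unfolding spanning_arborescence_def by blast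
qed

lemma funpow_ne_start_before_first_hit:
  assumes "(f ^^ n) x = y" and first: "\<forall>k<n. (f ^^ k) x \<noteq> y" and "0 < k" "k \<le> n"
  shows "(f ^^ k) x \<noteq> x"
proof
  assume "(f ^^ k) x = x"
  have "(f ^^ (n - k)) x = (f ^^ (n - k + k)) x"
    by (simp only: funpow_add comp_apply \<open>(f ^^ k) x = x\<close>)
  then have "(f ^^ (n - k)) x = y"
    using \<open>(f ^^ n) x = y\<close> \<open>k \<le> n\<close> by simp
  moreover have "n - k < n"
    using \<open>0 < k\<close> \<open>k \<le> n\<close> by simp
  ultimately show False
    using first by blast
qed

lemma ex_inj_real_vanishing_at: "\<exists>c :: 'a::finite \<Rightarrow> real. inj c \<and> c r = 0"
proof -
  obtain f :: "'a \<Rightarrow> nat" where "inj f"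
    using finite_imp_inj_to_nat_seg[of "UNIV :: 'a set"] by blast
  then have "inj (\<lambda>u. real (f u) - real (f r))"
    by (auto simp: inj_def)
  then show ?thesis
    by auto
qed

definition tree_matrix :: "('n \<Rightarrow> real) \<Rightarrow> ('n \<Rightarrow> 'n) \<Rightarrow> real^'n^'n" where
  "tree_matrix c p = (\<chi> i. c i *\<^sub>R (axis (p i) 1 - axis i 1))"

lemma tree_matrix_row_sum: "(\<Sum>j\<in>UNIV. tree_matrix c p $ i $ j) = 0"
  by (simp add: tree_matrix_def sum_subtractf sum_axis flip: sum_distrib_left)

lemma tree_matrix_eq_0:
  assumes "j \<noteq> i" and "j \<noteq> p i \<or> c i = 0"
  shows "tree_matrix c p $ i $ j = 0"
  using assms by (auto simp: tree_matrix_def axis_def)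

text \<open>The weights solve a_(k+1) (c_(k+1) - c_0) = a_k c_k, which is the left eigenvector equation
  for the eigenvalue - c_0 along the path w 0, w 1, ..., w D, writing c_k for c (w k).\<close>

definition path_weight :: "('n \<Rightarrow> real) \<Rightarrow> (nat \<Rightarrow> 'n) \<Rightarrow> nat \<Rightarrow> real" where
  "path_weight c w k = (\<Prod>i<k. c (w i) / (c (w (Suc i)) - c (w 0)))"

definition path_vector :: "('n \<Rightarrow> real) \<Rightarrow> (nat \<Rightarrow> 'n) \<Rightarrow> nat \<Rightarrow> real^'n" where
  "path_vector c w D = (\<Sum>k\<le>D. path_weight c w k *\<^sub>R axis (w k) 1)"

lemma path_vector_left_eigenvector:
  fixes c :: "'n::finite \<Rightarrow> real" and w :: "nat \<Rightarrow> 'n"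
  assumes path: "\<And>k. k < D \<Longrightarrow> w (Suc k) = p (w k)" and root: "c (w D) = 0"
    and weight_ne_start: "\<And>k. k < D \<Longrightarrow> c (w (Suc k)) \<noteq> c (w 0)"
  shows "path_vector c w D v* tree_matrix c p = (- c (w 0)) *\<^sub>R path_vector c w D"
proof -
  define a where "a = path_weight c w"
  define e where "e k = (axis (w k) 1 :: real^'n)" for k
  have a_Suc: "a (Suc k) * (c (w (Suc k)) - c (w 0)) = a k * c (w k)" if "k < D" for k
    using weight_ne_start[OF that] by (simp add: a_def path_weight_def)
  have row: "e k v* tree_matrix c p = c (w k) *\<^sub>R (e (Suc k) - e k)" if "k < D" for k
    using path[OF that] by (simp add: e_def axis_vector_matrix_mult tree_matrix_def)
  have sum_atMost: "(\<Sum>k\<le>D. f k) = (\<Sum>k<D. f k) + f D" for f :: "nat \<Rightarrow> real^'n"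
    by (simp flip: lessThan_Suc_atMost)
  have shifted: "(\<Sum>k<D. (a k * c (w k)) *\<^sub>R e (Suc k)) = (\<Sum>k\<le>D. (a k * (c (w k) - c (w 0))) *\<^sub>R e k)"
    unfolding sum.atMost_shift[of _ D] by (simp add: a_Suc)
  have unshifted: "(\<Sum>k<D. (a k * c (w k)) *\<^sub>R e k) = (\<Sum>k\<le>D. (a k * c (w k)) *\<^sub>R e k)"
    using root by (simp add: sum_atMost)
  have "path_vector c w D v* tree_matrix c p = (\<Sum>k\<le>D. a k *\<^sub>R (e k v* tree_matrix c p))"
    by (simp add: path_vector_def a_def e_def sum_vector_matrix_mult scaleR_vector_matrix_assoc)
  also have "\<dots> = (\<Sum>k<D. a k *\<^sub>R (e k v* tree_matrix c p))"
    using root by (simp add: sum_atMost e_def axis_vector_matrix_mult tree_matrix_def)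
  also have "\<dots> = (\<Sum>k<D. (a k * c (w k)) *\<^sub>R e (Suc k) - (a k * c (w k)) *\<^sub>R e k)"
    by (rule sum.cong) (simp_all add: row scaleR_diff_right)
  also have "\<dots> = (\<Sum>k\<le>D. (a k * (c (w k) - c (w 0))) *\<^sub>R e k) - (\<Sum>k\<le>D. (a k * c (w k)) *\<^sub>R e k)"
    by (simp only: sum_subtractf shifted unshifted)
  also have "\<dots> = (- c (w 0)) *\<^sub>R path_vector c w D"
    by (simp add: path_vector_def a_def e_def scaleR_sum_right flip: sum_subtractf)
      (simp add: algebra_simps)
  finally show ?thesis .
qed

lemma path_vector_at_end:
  fixes c :: "'n::finite \<Rightarrow> real" and w :: "nat \<Rightarrow> 'n"
  assumes "w D = r" and not_root: "\<And>k. k < D \<Longrightarrow> w k \<noteq> r"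
    and nonzero: "\<And>k. k < D \<Longrightarrow> c (w k) \<noteq> 0"
    and weight_ne_start: "\<And>k. k < D \<Longrightarrow> c (w (Suc k)) \<noteq> c (w 0)"
  shows "path_vector c w D $ r \<noteq> 0"
proof -
  have "path_vector c w D $ r = (\<Sum>k\<le>D. if k = D then path_weight c w k else 0)"
    unfolding path_vector_def sum_component
  proof (rule sum.cong)
    fix k assume "k \<in> {..D}"
    then have "k = D \<or> k < D"
      by auto
    then show "(path_weight c w k *\<^sub>R axis (w k) 1) $ r = (if k = D then path_weight c w k else 0)"
      using \<open>w D = r\<close> not_root[of k] by (auto simp: axis_def)
  qed simp
  also have "\<dots> = path_weight c w D"
    by simp
  also have "\<dots> \<noteq> 0"
    using nonzero weight_ne_start by (simp add: path_weight_def)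
  finally show ?thesis .
qed

lemma tree_matrix_left_eigenvector:
  fixes c :: "'n::finite \<Rightarrow> real"
  assumes "inj c" "c r = 0" and reach: "(p ^^ n) v = r"
  shows "\<exists>y. y v* tree_matrix c p = (- c v) *\<^sub>R y \<and> y $ r \<noteq> 0"
proof -
  define D where "D = (LEAST k. (p ^^ k) v = r)"
  define w where "w k = (p ^^ k) v" for k
  have "w D = r"
    unfolding w_def D_def using reach by (rule LeastI)
  have not_root: "w k \<noteq> r" if "k < D" for k
    using that unfolding w_def D_def by (rule not_less_Least)
  have nonzero: "c (w k) \<noteq> 0" if "k < D" for k
    using not_root[OF that] \<open>inj c\<close> \<open>c r = 0\<close> by (metis injD)
  have weight_ne_start: "c (w (Suc k)) \<noteq> c (w 0)" if "k < D" for k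
  proof -
    have "w (Suc k) \<noteq> v"
      unfolding w_def using \<open>w D = r\<close> not_root that
      by (intro funpow_ne_start_before_first_hit[where f = p and n = D]) (auto simp: w_def)
    then show ?thesis
      using \<open>inj c\<close> by (simp add: w_def inj_eq)
  qed
  have step: "w (Suc k) = p (w k)" for k
    by (simp add: w_def)
  have "c (w D) = 0"
    using \<open>w D = r\<close> \<open>c r = 0\<close> by simp
  then have "path_vector c w D v* tree_matrix c p = (- c (w 0)) *\<^sub>R path_vector c w D"
    by (intro path_vector_left_eigenvector step weight_ne_start)
  moreover have "path_vector c w D $ r \<noteq> 0"
    using \<open>w D = r\<close> not_root nonzero weight_ne_start by (rule path_vector_at_end)
  ultimately show ?thesis
    by (auto simp: w_def)
qed

lemma tree_matrix_controllable:
  fixes c :: "'n::finite \<Rightarrow> real"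
  assumes "inj c" "c r = 0" and reach: "\<And>v. \<exists>k. (p ^^ k) v = r"
  shows "controllable_pair (tree_matrix c p) (unit_vec r)"
proof (rule controllable_pair_if_left_eigenvectors)
  show "inj (\<lambda>v. - c v)"
    using \<open>inj c\<close> by (simp add: inj_def)
  show "\<exists>y. y v* tree_matrix c p = - c v *\<^sub>R y \<and> y \<bullet> unit_vec r \<noteq> 0" for v
    using reach[of v] tree_matrix_left_eigenvector[OF \<open>inj c\<close> \<open>c r = 0\<close>]
    unfolding inner_unit_vec by blast
qed

theorem lemma2:
  fixes E :: "'n::finite \<Rightarrow> 'n \<Rightarrow> bool" and q :: 'n
  assumes "strongly_connected E"
  shows "\<exists>G :: real^'n^'n.
           (\<forall>i. (\<Sum>j\<in>UNIV. G $ i $ j) = 0) \<and>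
           (\<forall>i j. j \<noteq> i \<and> \<not> E j i \<longrightarrow> G $ i $ j = 0) \<and>
           controllable_pair G (unit_vec q)"
proof -
  have "E\<^sup>*\<^sup>* q u" for u
    using assms unfolding strongly_connected_def by blast
  then obtain p where parent: "\<And>u. u \<noteq> q \<Longrightarrow> E (p u) u" and reach: "\<And>v. \<exists>k. (p ^^ k) v = q"
    using ex_spanning_arborescence unfolding spanning_arborescence_def by metis
  obtain c :: "'n \<Rightarrow> real" where "inj c" "c q = 0"
    using ex_inj_real_vanishing_at by blast
  have "tree_matrix c p $ i $ j = 0" if "j \<noteq> i" "\<not> E j i" for i j
    using that parent[of i] \<open>c q = 0\<close> by (cases "i = q") (auto intro: tree_matrix_eq_0)
  then show ?thesis
    using tree_matrix_row_sum tree_matrix_controllable[OF \<open>inj c\<close> \<open>c q = 0\<close> reach] by blast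
qed

end
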